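(* For every $\nu,c>0$, the function $$z\mapsto\frac{\left(H_{-\nu-c}(z)\right)^2}{H_{-\nu}(z)\,H_{-\nu-2c}(z)}$$ is decreasing on $\mathbb{R}$.
   Context: For $\nu>0$ and $z\in\mathbb{R}$, $H_{-\nu}(z)=\frac{1}{\Gamma(\nu)}\int_0^\infty e^{-t^2-2tz}t^{\nu-1}\,dt$ (Hermite function; equivalently $H_{-\nu}(z)=2^{-\nu/2}e^{z^2/2}D_{-\nu}(\sqrt2 z)$ with $D$ the parabolic cylinder function). *)

theory Defs
  imports "HOL-Analysis.Analysis"
begin

text \<open>Hermite function of negative index: for nu > 0 and real z,
  H_{-nu}(z) = 1/Gamma(nu) * integral_0^infinity exp(-t^2 - 2 t z) t^(nu-1) dt.
  The argument of hermite_neg is nu (the index is -nu).\<close>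
definition hermite_neg :: "real \<Rightarrow> real \<Rightarrow> real" where
  "hermite_neg \<nu> z =
     (1 / Gamma \<nu>) * (LBINT t:{0<..}. exp (- (t\<^sup>2) - 2 * t * z) * t powr (\<nu> - 1))"

end

theory Submission
  imports Defs
begin

text \<open>
  Write I_a(z) = Gamma(a) H_{-a}(z) = integral over t > 0 of exp(-t^2 - 2tz) t^(a-1).
  In the coordinates t = q s, u = q (1 - s) the product I_a(z) I_d(z) becomes the integral over
  q > 0 of exp(-2zq) q^(a+d-1) G(q), where G(q) integrates the Beta weight s^(a-1) (1-s)^(d-1)
  against exp(-q^2 (s^2 + (1-s)^2)) over 0 < s < 1. Symmetrised in (a, d), the weight of
  I_nu I_(nu+2c) is that of I_(nu+c)^2 times 2 cosh(c ln(s/(1-s))), an increasing function of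
  s^2 + (1-s)^2. Twice we use that exponential tilting preserves a monotone likelihood ratio:
  if p/r increases with k, then (integral of e^(tk) p) / (integral of e^(tk) r) increases with t.
  Applied in s with t = -q^2, the ratio of the inner integrals decreases in q; applied in q with
  t = -2z, the ratio I_nu I_(nu+2c) / I_(nu+c)^2 increases in z.
\<close>

lemma rearrangement_le:
  fixes a b x y :: "'a::dioid"
  assumes "a \<le> b" "x \<le> y"
  shows "y * a + x * b \<le> x * a + y * b"
proof -
  obtain d where b: "b = a + d" using assms(1) le_iff_add by blast
  obtain e where y: "y = x + e" using assms(2) le_iff_add by blast
  have "x * a + y * b = (y * a + x * b) + e * d"
    unfolding b y by (simp add: algebra_simps)
  then show ?thesis using le_iff_add by auto
qed

lemma nn_integral_mult_le_similarly_ordered: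
  fixes u v p r :: "'a \<Rightarrow> ennreal" and key :: "'a \<Rightarrow> 'b::linorder"
  assumes [measurable]: "u \<in> borel_measurable M" "v \<in> borel_measurable M"
    "p \<in> borel_measurable M" "r \<in> borel_measurable M"
    and ratio_pr: "\<And>x y. key x \<le> key y \<Longrightarrow> p x * r y \<le> p y * r x"
    and ratio_vu: "\<And>x y. key x \<le> key y \<Longrightarrow> v x * u y \<le> u x * v y"
  shows "(\<integral>\<^sup>+x. u x * p x \<partial>M) * (\<integral>\<^sup>+x. v x * r x \<partial>M)
       \<le> (\<integral>\<^sup>+x. v x * p x \<partial>M) * (\<integral>\<^sup>+x. u x * r x \<partial>M)"
proof -
  have symmetrize: "(\<integral>\<^sup>+x. f x \<partial>M) * (\<integral>\<^sup>+x. g x \<partial>M) + (\<integral>\<^sup>+x. f x \<partial>M) * (\<integral>\<^sup>+x. g x \<partial>M)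
      = (\<integral>\<^sup>+x. \<integral>\<^sup>+y. f x * g y + f y * g x \<partial>M \<partial>M)"
    if [measurable]: "f \<in> borel_measurable M" "g \<in> borel_measurable M" for f g :: "'a \<Rightarrow> ennreal"
  proof -
    have "(\<integral>\<^sup>+x. \<integral>\<^sup>+y. f x * g y + f y * g x \<partial>M \<partial>M)
        = (\<integral>\<^sup>+x. f x * (\<integral>\<^sup>+y. g y \<partial>M) + (\<integral>\<^sup>+y. f y \<partial>M) * g x \<partial>M)"
      by (simp add: nn_integral_add nn_integral_cmult nn_integral_multc)
    then show ?thesis
      by (simp add: nn_integral_add nn_integral_cmult nn_integral_multc mult.commute)
  qed
  have pointwise: "u x * p x * (v y * r y) + u y * p y * (v x * r x)
      \<le> v x * p x * (u y * r y) + v y * p y * (u x * r x)" for x y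
  proof (cases "key x \<le> key y")
    case True
    from rearrangement_le[OF ratio_pr[OF True] ratio_vu[OF True]] show ?thesis
      by (simp add: mult_ac)
  next
    case False
    then have "key y \<le> key x" by simp
    from rearrangement_le[OF ratio_pr[OF this] ratio_vu[OF this]] show ?thesis
      by (simp add: mult_ac add_ac)
  qed
  have "(\<integral>\<^sup>+x. u x * p x \<partial>M) * (\<integral>\<^sup>+x. v x * r x \<partial>M) + (\<integral>\<^sup>+x. u x * p x \<partial>M) * (\<integral>\<^sup>+x. v x * r x \<partial>M)
     \<le> (\<integral>\<^sup>+x. v x * p x \<partial>M) * (\<integral>\<^sup>+x. u x * r x \<partial>M) + (\<integral>\<^sup>+x. v x * p x \<partial>M) * (\<integral>\<^sup>+x. u x * r x \<partial>M)"
    unfolding symmetrize[of "\<lambda>x. u x * p x" "\<lambda>x. v x * r x", simplified]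
      symmetrize[of "\<lambda>x. v x * p x" "\<lambda>x. u x * r x", simplified]
    by (intro nn_integral_mono pointwise)
  then show ?thesis
    by (meson add_strict_mono not_le)
qed

lemma nn_integral_exp_tilt_ratio_mono:
  fixes p r :: "'a \<Rightarrow> ennreal" and key :: "'a \<Rightarrow> real" and a b :: real
  assumes [measurable]: "key \<in> borel_measurable M" "p \<in> borel_measurable M" "r \<in> borel_measurable M"
    and ratio_pr: "\<And>x y. key x \<le> key y \<Longrightarrow> p x * r y \<le> p y * r x"
    and "a \<le> b"
  shows "(\<integral>\<^sup>+x. ennreal (exp (a * key x)) * p x \<partial>M) * (\<integral>\<^sup>+x. ennreal (exp (b * key x)) * r x \<partial>M)
       \<le> (\<integral>\<^sup>+x. ennreal (exp (b * key x)) * p x \<partial>M) * (\<integral>\<^sup>+x. ennreal (exp (a * key x)) * r x \<partial>M)"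
proof (rule nn_integral_mult_le_similarly_ordered[OF _ _ _ _ ratio_pr])
  fix x y assume "key x \<le> key y"
  then have "b * key x + a * key y \<le> a * key x + b * key y"
    using mult_right_mono[OF \<open>a \<le> b\<close>, of "key y - key x"] by (simp add: algebra_simps)
  then show "ennreal (exp (b * key x)) * ennreal (exp (a * key y))
      \<le> ennreal (exp (a * key x)) * ennreal (exp (b * key y))"
    by (simp add: ennreal_mult''[symmetric] exp_add[symmetric] del: ennreal_mult'')
qed auto

lemma cosh_real_le_cosh_iff: "cosh x \<le> cosh y \<longleftrightarrow> \<bar>x\<bar> \<le> \<bar>y :: real\<bar>"
proof -
  have "cosh t = cosh \<bar>t\<bar>" for t :: real
    by (cases "t \<ge> 0") auto
  then show ?thesis
    by (metis abs_ge_zero cosh_real_nonneg_le_iff)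
qed

lemma cosh_ln_odds:
  fixes s :: real
  assumes "0 < s" "s < 1"
  shows "cosh (ln (s / (1 - s))) = (1 / (s * (1 - s)) - 2) / 2"
  using assms by (simp add: cosh_ln_real field_simps power2_eq_square)

lemma cosh_ln_odds_mono:
  fixes c s t :: real
  assumes s: "0 < s" "s < 1" and t: "0 < t" "t < 1"
    and le: "s\<^sup>2 + (1 - s)\<^sup>2 \<le> t\<^sup>2 + (1 - t)\<^sup>2"
  shows "cosh (c * ln (s / (1 - s))) \<le> cosh (c * ln (t / (1 - t)))"
proof -
  have "t * (1 - t) \<le> s * (1 - s)"
    using le by (simp add: power2_eq_square algebra_simps)
  then have "1 / (s * (1 - s)) \<le> 1 / (t * (1 - t))"
    using s t by (intro divide_left_mono) auto
  then have "cosh (ln (s / (1 - s))) \<le> cosh (ln (t / (1 - t)))"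
    unfolding cosh_ln_odds[OF s] cosh_ln_odds[OF t] by simp
  then have "\<bar>c * ln (s / (1 - s))\<bar> \<le> \<bar>c * ln (t / (1 - t))\<bar>"
    unfolding cosh_real_le_cosh_iff abs_mult by (simp add: mult_left_mono)
  then show ?thesis
    unfolding cosh_real_le_cosh_iff .
qed

lemma borel_measurable_cosh_real [measurable]: "(cosh :: real \<Rightarrow> real) \<in> borel_measurable borel"
  by (intro borel_measurable_continuous_onI continuous_intros)

definition hermite_integrand :: "real \<Rightarrow> real \<Rightarrow> real \<Rightarrow> real" where
  "hermite_integrand a z t = indicator {0<..} t * (exp (- (t\<^sup>2) - 2 * t * z) * t powr (a - 1))"

definition beta_weight :: "real \<Rightarrow> real \<Rightarrow> real \<Rightarrow> real" where
  "beta_weight a d s = indicator {0<..<1} s * (s powr (a - 1) * (1 - s) powr (d - 1))"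

definition gauss_transform :: "(real \<Rightarrow> real) \<Rightarrow> real \<Rightarrow> ennreal" where
  "gauss_transform w q =
     (\<integral>\<^sup>+s. ennreal (exp (- (q\<^sup>2) * (s\<^sup>2 + (1 - s)\<^sup>2))) * ennreal (w s) \<partial>lborel)"

lemma hermite_integrand_nonneg: "0 \<le> hermite_integrand a z t"
  by (simp add: hermite_integrand_def)

lemma beta_weight_nonneg: "0 \<le> beta_weight a d s"
  by (simp add: beta_weight_def)

lemma hermite_integrand_measurable [measurable]: "hermite_integrand a z \<in> borel_measurable borel"
  unfolding hermite_integrand_def by measurable

lemma hermite_neg_eq_integral: "hermite_neg a z = integral\<^sup>L lborel (hermite_integrand a z) / Gamma a"
  unfolding hermite_neg_def set_lebesgue_integral_def hermite_integrand_def[abs_def] by simp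

lemma beta_weight_measurable [measurable]: "beta_weight a d \<in> borel_measurable borel"
  unfolding beta_weight_def by measurable

lemma beta_weight_symmetrize:
  "beta_weight \<nu> (\<nu> + 2 * c) s + beta_weight (\<nu> + 2 * c) \<nu> s
   = beta_weight (\<nu> + c) (\<nu> + c) s * (2 * cosh (c * ln (s / (1 - s))))"
proof (cases "0 < s \<and> s < 1")
  case True
  then show ?thesis
    by (simp add: beta_weight_def powr_def cosh_def ln_div exp_add[symmetric] exp_minus[symmetric]
        algebra_simps)
qed (auto simp: beta_weight_def)

lemma gauss_transform_measurable [measurable]:
  assumes [measurable]: "w \<in> borel_measurable borel"
  shows "gauss_transform w \<in> borel_measurable borel"
  unfolding gauss_transform_def by measurable

lemma gauss_transform_add:
  assumes [measurable]: "v \<in> borel_measurable borel" "w \<in> borel_measurable borel"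
    and "\<And>s. 0 \<le> v s" "\<And>s. 0 \<le> w s"
  shows "gauss_transform (\<lambda>s. v s + w s) q = gauss_transform v q + gauss_transform w q"
  unfolding gauss_transform_def using assms(3,4)
  by (simp add: nn_integral_add[symmetric] distrib_left)

lemma gauss_transform_cosh_ratio_antimono:
  fixes w :: "real \<Rightarrow> real" and c q1 q2 :: real
  assumes [measurable]: "w \<in> borel_measurable borel"
    and w_nonneg: "\<And>s. 0 \<le> w s" and w_support: "\<And>s. s \<notin> {0<..<1} \<Longrightarrow> w s = 0"
    and q: "0 \<le> q1" "q1 \<le> q2"
  defines "w\<^sub>c \<equiv> \<lambda>s. w s * (2 * cosh (c * ln (s / (1 - s))))"
  shows "gauss_transform w q1 * gauss_transform w\<^sub>c q2 \<le> gauss_transform w q2 * gauss_transform w\<^sub>c q1"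
proof -
  have ratio: "ennreal (w\<^sub>c x) * ennreal (w y) \<le> ennreal (w\<^sub>c y) * ennreal (w x)"
    if "x\<^sup>2 + (1 - x)\<^sup>2 \<le> y\<^sup>2 + (1 - y)\<^sup>2" for x y
  proof (cases "x \<in> {0<..<1} \<and> y \<in> {0<..<1}")
    case True
    then have "w\<^sub>c x * w y \<le> w\<^sub>c y * w x"
      using cosh_ln_odds_mono[OF _ _ _ _ that, of c] w_nonneg
      by (auto simp: w\<^sub>c_def intro!: mult_left_mono mult_right_mono)
    then show ?thesis
      by (simp add: w\<^sub>c_def w_nonneg ennreal_mult''[symmetric] del: ennreal_mult'')
  qed (auto simp: w_support w\<^sub>c_def)
  have "q1\<^sup>2 \<le> q2\<^sup>2"
    using q by (simp add: power_mono)
  then have "gauss_transform w\<^sub>c q2 * gauss_transform w q1 \<le> gauss_transform w\<^sub>c q1 * gauss_transform w q2"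
    unfolding gauss_transform_def w\<^sub>c_def
    by (intro nn_integral_exp_tilt_ratio_mono[where key="\<lambda>s. s\<^sup>2 + (1 - s)\<^sup>2", OF _ _ _ ratio[unfolded w\<^sub>c_def]]) auto
  then show ?thesis
    by (simp add: mult.commute)
qed

lemma nn_integral_mult_eq_convolution:
  fixes f g :: "real \<Rightarrow> ennreal"
  assumes [measurable]: "f \<in> borel_measurable borel" "g \<in> borel_measurable borel"
  shows "(\<integral>\<^sup>+x. f x \<partial>lborel) * (\<integral>\<^sup>+x. g x \<partial>lborel) = (\<integral>\<^sup>+q. \<integral>\<^sup>+s. f s * g (q - s) \<partial>lborel \<partial>lborel)"
proof -
  have "(\<integral>\<^sup>+x. f x \<partial>lborel) * (\<integral>\<^sup>+x. g x \<partial>lborel) = (\<integral>\<^sup>+s. \<integral>\<^sup>+t. f s * g t \<partial>lborel \<partial>lborel)"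
    by (simp add: nn_integral_cmult nn_integral_multc)
  also have "\<dots> = (\<integral>\<^sup>+s. \<integral>\<^sup>+q. f s * g (q - s) \<partial>lborel \<partial>lborel)"
  proof (rule nn_integral_cong)
    fix s
    show "(\<integral>\<^sup>+t. f s * g t \<partial>lborel) = (\<integral>\<^sup>+q. f s * g (q - s) \<partial>lborel)"
      by (subst nn_integral_real_affine[where c=1 and t="-s"]) auto
  qed
  also have "\<dots> = (\<integral>\<^sup>+q. \<integral>\<^sup>+s. f s * g (q - s) \<partial>lborel \<partial>lborel)"
    by (rule lborel_pair.Fubini') measurable
  finally show ?thesis .
qed

lemma hermite_integrand_scale:
  assumes "0 < q"
  shows "hermite_integrand a z (q * s) * hermite_integrand d z (q - q * s)
       = exp (-2 * z * q) * q powr (a + d - 2) * (exp (- (q\<^sup>2) * (s\<^sup>2 + (1 - s)\<^sup>2)) * beta_weight a d s)"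
proof (cases "0 < s \<and> s < 1")
  case True
  have "q - q * s = q * (1 - s)"
    by (simp add: algebra_simps)
  moreover have "exp (- ((q * s)\<^sup>2) - 2 * (q * s) * z) * exp (- ((q * (1 - s))\<^sup>2) - 2 * (q * (1 - s)) * z)
      = exp (-2 * z * q) * exp (- (q\<^sup>2) * (s\<^sup>2 + (1 - s)\<^sup>2))"
    unfolding exp_add[symmetric] by (simp add: power2_eq_square algebra_simps)
  ultimately show ?thesis
    using True assms
    by (simp add: hermite_integrand_def beta_weight_def powr_mult powr_add[symmetric] mult_ac)
next
  case False
  then have "q * s \<le> 0 \<or> q - q * s \<le> 0"
    using assms by (auto simp: mult_le_0_iff not_less intro: mult_left_mono[of 1 s q, simplified])
  then show ?thesis
    using False by (auto simp: hermite_integrand_def beta_weight_def)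
qed

lemma nn_integral_hermite_integrand_mult:
  "(\<integral>\<^sup>+t. ennreal (hermite_integrand a z t) \<partial>lborel) * (\<integral>\<^sup>+t. ennreal (hermite_integrand d z t) \<partial>lborel)
   = (\<integral>\<^sup>+q. ennreal (exp (-2 * z * q)) *
        (ennreal (indicator {0<..} q * q powr (a + d - 1)) * gauss_transform (beta_weight a d) q) \<partial>lborel)"
proof -
  have inner: "(\<integral>\<^sup>+s. ennreal (hermite_integrand a z s) * ennreal (hermite_integrand d z (q - s)) \<partial>lborel)
      = ennreal (exp (-2 * z * q)) *
        (ennreal (indicator {0<..} q * q powr (a + d - 1)) * gauss_transform (beta_weight a d) q)" for q
  proof (cases "0 < q")
    case True
    have "(\<integral>\<^sup>+s. ennreal (hermite_integrand a z s) * ennreal (hermite_integrand d z (q - s)) \<partial>lborel)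
        = ennreal q * (\<integral>\<^sup>+s. ennreal (hermite_integrand a z (q * s) * hermite_integrand d z (q - q * s)) \<partial>lborel)"
      using True by (subst nn_integral_real_affine[where c=q and t=0])
        (auto simp: ennreal_mult''[symmetric] hermite_integrand_nonneg)
    also have "\<dots> = ennreal q * (\<integral>\<^sup>+s. ennreal (exp (-2 * z * q) * q powr (a + d - 2)) *
        (ennreal (exp (- (q\<^sup>2) * (s\<^sup>2 + (1 - s)\<^sup>2))) * ennreal (beta_weight a d s)) \<partial>lborel)"
      unfolding hermite_integrand_scale[OF True]
      by (simp add: ennreal_mult''[symmetric] beta_weight_nonneg del: ennreal_mult'')
    also have "\<dots> = ennreal (q * (exp (-2 * z * q) * q powr (a + d - 2))) * gauss_transform (beta_weight a d) q"
      using True by (simp add: gauss_transform_def nn_integral_cmult ennreal_mult'' mult.assoc)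
    also have "q * (exp (-2 * z * q) * q powr (a + d - 2)) = exp (-2 * z * q) * q powr (a + d - 1)"
      using True by (simp add: powr_mult_base)
    finally show ?thesis
      using True by (simp add: ennreal_mult'' mult.assoc)
  next
    case False
    then have vanish: "hermite_integrand a z s * hermite_integrand d z (q - s) = 0" for s
      by (simp add: hermite_integrand_def indicator_def)
    show ?thesis
      using False by (simp add: ennreal_mult''[symmetric] hermite_integrand_nonneg vanish del: ennreal_mult'')
  qed
  show ?thesis
    by (simp add: nn_integral_mult_eq_convolution inner)
qed

lemma hermite_integrand_le_Gamma_integrand:
  "hermite_integrand a z t \<le> exp ((1 - 2 * z)\<^sup>2 / 4) * (indicator {0..} t * t powr (a - 1) / exp t)"
proof (cases "0 < t")
  case True
  have "- (t\<^sup>2) - 2 * t * z \<le> (1 - 2 * z)\<^sup>2 / 4 - t"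
    using zero_le_power2[of "t - (1 - 2 * z) / 2"] by (simp add: power2_eq_square field_simps)
  then have "exp (- (t\<^sup>2) - 2 * t * z) \<le> exp ((1 - 2 * z)\<^sup>2 / 4) / exp t"
    by (simp add: exp_diff[symmetric])
  then have "exp (- (t\<^sup>2) - 2 * t * z) * t powr (a - 1) \<le> exp ((1 - 2 * z)\<^sup>2 / 4) / exp t * t powr (a - 1)"
    by (rule mult_right_mono) simp
  then show ?thesis
    using True by (simp add: hermite_integrand_def)
qed (simp add: hermite_integrand_def)

lemma nn_integral_hermite_integrand_finite:
  assumes "0 < a"
  shows "(\<integral>\<^sup>+t. ennreal (hermite_integrand a z t) \<partial>lborel) < \<infinity>"
proof -
  have "(\<integral>\<^sup>+t. ennreal (hermite_integrand a z t) \<partial>lborel)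
      \<le> (\<integral>\<^sup>+t. ennreal (exp ((1 - 2 * z)\<^sup>2 / 4)) * ennreal (indicator {0..} t * t powr (a - 1) / exp t) \<partial>lborel)"
  proof (intro nn_integral_mono)
    fix t
    have "ennreal (hermite_integrand a z t)
        \<le> ennreal (exp ((1 - 2 * z)\<^sup>2 / 4) * (indicator {0..} t * t powr (a - 1) / exp t))"
      by (rule ennreal_leI) (rule hermite_integrand_le_Gamma_integrand)
    also have "\<dots> = ennreal (exp ((1 - 2 * z)\<^sup>2 / 4)) * ennreal (indicator {0..} t * t powr (a - 1) / exp t)"
      by (rule ennreal_mult') simp
    finally show "ennreal (hermite_integrand a z t) \<le> \<dots>" .
  qed
  also have "\<dots> = ennreal (exp ((1 - 2 * z)\<^sup>2 / 4)) * Gamma a"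
    using assms by (simp add: nn_integral_cmult Gamma_conv_nn_integral_real)
  finally show ?thesis
    by (simp add: ennreal_mult_less_top le_less_trans)
qed

lemma nn_integral_hermite_integrand_nonzero:
  "(\<integral>\<^sup>+t. ennreal (hermite_integrand a z t) \<partial>lborel) \<noteq> 0"
proof
  assume "(\<integral>\<^sup>+t. ennreal (hermite_integrand a z t) \<partial>lborel) = 0"
  then have "AE t in lborel. hermite_integrand a z t = 0"
    by (simp add: nn_integral_0_iff_AE hermite_integrand_nonneg)
  then have "AE t in lborel. t \<notin> {1..2::real}"
    by eventually_elim (auto simp: hermite_integrand_def)
  then have "{1..2::real} \<in> null_sets lborel"
    by (simp add: AE_iff_null_sets)
  then show False
    by (simp add: null_sets_def)
qed

lemma nn_integral_hermite_integrand:
  assumes "0 < a"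
  shows "(\<integral>\<^sup>+t. ennreal (hermite_integrand a z t) \<partial>lborel) = ennreal (integral\<^sup>L lborel (hermite_integrand a z))"
proof (rule nn_integral_eq_integral)
  show "integrable lborel (hermite_integrand a z)"
    using nn_integral_hermite_integrand_finite[OF assms]
    by (simp add: integrable_iff_bounded hermite_integrand_nonneg)
qed (simp add: hermite_integrand_nonneg)

lemma hermite_integral_pos:
  assumes "0 < a"
  shows "0 < integral\<^sup>L lborel (hermite_integrand a z)"
proof -
  have "0 \<le> integral\<^sup>L lborel (hermite_integrand a z)"
    by (simp add: hermite_integrand_nonneg)
  moreover have "integral\<^sup>L lborel (hermite_integrand a z) \<noteq> 0"
    using nn_integral_hermite_integrand_nonzero[of a z] nn_integral_hermite_integrand[OF assms] by auto
  ultimately show ?thesis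
    by simp
qed

lemma nn_integral_hermite_integrand_ratio_antimono:
  fixes \<nu> c z1 z2 :: real
  assumes "z1 \<le> z2"
  defines "N a z \<equiv> \<integral>\<^sup>+t. ennreal (hermite_integrand a z t) \<partial>lborel"
  shows "N (\<nu> + c) z2 * N (\<nu> + c) z2 * (N \<nu> z1 * N (\<nu> + 2 * c) z1)
       \<le> N (\<nu> + c) z1 * N (\<nu> + c) z1 * (N \<nu> z2 * N (\<nu> + 2 * c) z2)"
proof -
  define w where "w = beta_weight (\<nu> + c) (\<nu> + c)"
  define w\<^sub>c where "w\<^sub>c s = w s * (2 * cosh (c * ln (s / (1 - s))))" for s
  define \<rho> where "\<rho> q = ennreal (indicator {0<..} q * q powr (2 * (\<nu> + c) - 1))" for q
  have [measurable]: "\<rho> \<in> borel_measurable borel" "w \<in> borel_measurable borel"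
    unfolding \<rho>_def w_def by measurable
  have square: "N (\<nu> + c) z * N (\<nu> + c) z = (\<integral>\<^sup>+q. ennreal (exp (-2 * z * q)) * (\<rho> q * gauss_transform w q) \<partial>lborel)" for z
    unfolding N_def nn_integral_hermite_integrand_mult \<rho>_def w_def by (simp add: algebra_simps)
  have cross: "N \<nu> z * N (\<nu> + 2 * c) z + N \<nu> z * N (\<nu> + 2 * c) z
      = (\<integral>\<^sup>+q. ennreal (exp (-2 * z * q)) * (\<rho> q * gauss_transform w\<^sub>c q) \<partial>lborel)" for z
  proof -
    have "gauss_transform (beta_weight \<nu> (\<nu> + 2 * c)) q + gauss_transform (beta_weight (\<nu> + 2 * c) \<nu>) q
        = gauss_transform w\<^sub>c q" for q
      unfolding gauss_transform_add[symmetric, OF beta_weight_measurable beta_weight_measurable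
          beta_weight_nonneg beta_weight_nonneg] beta_weight_symmetrize w\<^sub>c_def w_def ..
    moreover have "N \<nu> z * N (\<nu> + 2 * c) z + N (\<nu> + 2 * c) z * N \<nu> z
        = (\<integral>\<^sup>+q. ennreal (exp (-2 * z * q)) * (\<rho> q * (gauss_transform (beta_weight \<nu> (\<nu> + 2 * c)) q
            + gauss_transform (beta_weight (\<nu> + 2 * c) \<nu>) q)) \<partial>lborel)"
      unfolding N_def nn_integral_hermite_integrand_mult \<rho>_def
      by (simp add: nn_integral_add[symmetric] distrib_left algebra_simps)
    ultimately show ?thesis
      by (simp add: mult.commute)
  qed
  have ratio: "\<rho> x * gauss_transform w x * (\<rho> y * gauss_transform w\<^sub>c y)
      \<le> \<rho> y * gauss_transform w y * (\<rho> x * gauss_transform w\<^sub>c x)" if "x \<le> y" for x y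
  proof (cases "0 < x")
    case True
    have "gauss_transform w x * gauss_transform w\<^sub>c y \<le> gauss_transform w y * gauss_transform w\<^sub>c x"
      unfolding w\<^sub>c_def using True that
      by (intro gauss_transform_cosh_ratio_antimono) (auto simp: w_def beta_weight_nonneg beta_weight_def)
    from mult_left_mono[OF this zero_le, of "\<rho> x * \<rho> y"] show ?thesis
      by (simp add: mult_ac)
  qed (simp add: \<rho>_def)
  have "- 2 * z2 \<le> - 2 * z1"
    using assms(1) by simp
  then have "(\<integral>\<^sup>+q. ennreal (exp (- 2 * z2 * q)) * (\<rho> q * gauss_transform w q) \<partial>lborel)
      * (\<integral>\<^sup>+q. ennreal (exp (- 2 * z1 * q)) * (\<rho> q * gauss_transform w\<^sub>c q) \<partial>lborel)
      \<le> (\<integral>\<^sup>+q. ennreal (exp (- 2 * z1 * q)) * (\<rho> q * gauss_transform w q) \<partial>lborel)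
      * (\<integral>\<^sup>+q. ennreal (exp (- 2 * z2 * q)) * (\<rho> q * gauss_transform w\<^sub>c q) \<partial>lborel)"
    using ratio unfolding w\<^sub>c_def
    by (intro nn_integral_exp_tilt_ratio_mono[where key="\<lambda>q. q"]) auto
  then have "N (\<nu> + c) z2 * N (\<nu> + c) z2 * (N \<nu> z1 * N (\<nu> + 2 * c) z1 + N \<nu> z1 * N (\<nu> + 2 * c) z1)
      \<le> N (\<nu> + c) z1 * N (\<nu> + c) z1 * (N \<nu> z2 * N (\<nu> + 2 * c) z2 + N \<nu> z2 * N (\<nu> + 2 * c) z2)"
    unfolding square cross by simp
  then show ?thesis
    unfolding distrib_left by (meson add_strict_mono not_le)
qed

lemma hermite_integral_ratio_antimono:
  fixes \<nu> c z1 z2 :: real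
  assumes "0 < \<nu>" "0 \<le> c" "z1 \<le> z2"
  defines "I a z \<equiv> integral\<^sup>L lborel (hermite_integrand a z)"
  shows "(I (\<nu> + c) z2)\<^sup>2 / (I \<nu> z2 * I (\<nu> + 2 * c) z2) \<le> (I (\<nu> + c) z1)\<^sup>2 / (I \<nu> z1 * I (\<nu> + 2 * c) z1)"
proof -
  have pos: "0 < I \<nu> z" "0 < I (\<nu> + c) z" "0 < I (\<nu> + 2 * c) z" for z
    using assms(1,2) unfolding I_def by (simp_all add: hermite_integral_pos)
  have "ennreal (I (\<nu> + c) z2 * I (\<nu> + c) z2 * (I \<nu> z1 * I (\<nu> + 2 * c) z1))
      \<le> ennreal (I (\<nu> + c) z1 * I (\<nu> + c) z1 * (I \<nu> z2 * I (\<nu> + 2 * c) z2))"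
    using nn_integral_hermite_integrand_ratio_antimono[OF assms(3), of \<nu> c] assms(1,2) pos[THEN less_imp_le]
    unfolding I_def by (simp add: nn_integral_hermite_integrand ennreal_mult'')
  then have "I (\<nu> + c) z2 * I (\<nu> + c) z2 * (I \<nu> z1 * I (\<nu> + 2 * c) z1)
      \<le> I (\<nu> + c) z1 * I (\<nu> + c) z1 * (I \<nu> z2 * I (\<nu> + 2 * c) z2)"
    by (rule ennreal_le_iff[THEN iffD1, rotated]) (intro mult_nonneg_nonneg less_imp_le pos)
  then show ?thesis
    using pos by (simp add: divide_simps power2_eq_square)
qed

theorem corollary9:
  fixes \<nu> c :: real
  assumes "\<nu> > 0" and "c > 0"
  shows "antimono
           (\<lambda>z. (hermite_neg (\<nu> + c) z)\<^sup>2 /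
                 (hermite_neg \<nu> z * hermite_neg (\<nu> + 2 * c) z))"
proof (rule antimonoI)
  fix z1 z2 :: real
  assume "z1 \<le> z2"
  define I where "I a z = integral\<^sup>L lborel (hermite_integrand a z)" for a z
  define R where "R z = (I (\<nu> + c) z)\<^sup>2 / (I \<nu> z * I (\<nu> + 2 * c) z)" for z
  define C where "C = Gamma \<nu> * Gamma (\<nu> + 2 * c) / (Gamma (\<nu> + c))\<^sup>2"
  have eq: "(hermite_neg (\<nu> + c) z)\<^sup>2 / (hermite_neg \<nu> z * hermite_neg (\<nu> + 2 * c) z) = C * R z" for z
    unfolding hermite_neg_eq_integral C_def R_def I_def using assms
    by (simp add: Gamma_real_pos hermite_integral_pos field_simps power2_eq_square)
  have "0 \<le> C"
    using assms by (simp add: C_def Gamma_real_pos less_imp_le)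
  moreover have "R z2 \<le> R z1"
    unfolding R_def I_def using assms \<open>z1 \<le> z2\<close> by (simp add: hermite_integral_ratio_antimono)
  ultimately show "(hermite_neg (\<nu> + c) z2)\<^sup>2 / (hermite_neg \<nu> z2 * hermite_neg (\<nu> + 2 * c) z2)
      \<le> (hermite_neg (\<nu> + c) z1)\<^sup>2 / (hermite_neg \<nu> z1 * hermite_neg (\<nu> + 2 * c) z1)"
    unfolding eq by (simp add: mult_left_mono)
qed

end
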